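(* There is an absolute constant $\kappa>0$ such that for every set $C$ of concepts over $\{0,1\}^n$ with $|C|\ge2$, every quantum network that exactly learns $C$ from quantum membership queries (i.e. for every $c\in C$, when its oracle gates are $QMQ_c$, it outputs with probability at least $2/3$ a representation of a Boolean circuit $h$ with $h(x)=c(x)$ for all $x$) has query complexity at least $\kappa\,(1/\hat\gamma^{C})^{1/2}$. In other words, any quantum exact learning algorithm for $C$ has sample complexity $\Omega((1/\hat\gamma^C)^{1/2})$.
   Context: For $C'\subseteq C$, $a\in\{0,1\}^n$, $b\in\{0,1\}$: $C'_{\langle a,b\rangle}=\{c\in C': c(a)=b\}$, $\gamma^{C'}_{\langle a,b\rangle}=|C'_{\langle a,b\rangle}|/|C'|$, $\gamma^{C'}_a=\min_b\gamma^{C'}_{\langle a,b\rangle}$, $\gamma^{C'}=\max_a\gamma^{C'}_a$, and $\hat\gamma^{C}=\min_{C'\subseteq C,|C'|\ge2}\gamma^{C'}$. A quantum network on an $m$-qubit register is a sequence $U_0,O_1,U_1,\dots,O_T,U_T$ of unitaries applied to $|0^m\rangle$, the $U_i$ arbitrary fixed unitaries and each $O_i$ an oracle gate, followed by a computational-basis measurement of some qubits whose outcome is the output; $T$ is the query complexity. The gate $QMQ_c$ maps $|x,b,y\rangle$ to $|x,b\oplus c(x),y\rangle$ for $x\in\{0,1\}^n$, $b\in\{0,1\}$. *)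

theory Defs
  imports Complex_Main "Jordan_Normal_Form.Matrix"
begin

text \<open>Inputs x in {0,1}^n are encoded as naturals x < 2^n (binary expansion).
 A concept over {0,1}^n is a function c :: nat => bool with c x = False for x >= 2^n.\<close>

definition concepts :: "nat \<Rightarrow> (nat \<Rightarrow> bool) set" where
  "concepts n = {c. \<forall>x. 2^n \<le> x \<longrightarrow> \<not> c x}"

definition gamma_ab :: "(nat \<Rightarrow> bool) set \<Rightarrow> nat \<Rightarrow> bool \<Rightarrow> real" where
  "gamma_ab C' a b = real (card {c \<in> C'. c a = b}) / real (card C')"

definition gamma_a :: "(nat \<Rightarrow> bool) set \<Rightarrow> nat \<Rightarrow> real" where
  "gamma_a C' a = min (gamma_ab C' a False) (gamma_ab C' a True)"

definition gamma :: "nat \<Rightarrow> (nat \<Rightarrow> bool) set \<Rightarrow> real" where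
  "gamma n C' = Max {gamma_a C' a | a. a < 2^n}"

definition gamma_hat :: "nat \<Rightarrow> (nat \<Rightarrow> bool) set \<Rightarrow> real" where
  "gamma_hat n C = Min {gamma n C' | C'. C' \<subseteq> C \<and> 2 \<le> card C'}"

text \<open>Quantum states on an m-qubit register: complex vectors of dimension 2^m, basis index
 i < 2^m is the bit string of i written with m bits, most significant bit first.\<close>

definition mat_adj :: "complex mat \<Rightarrow> complex mat" where
  "mat_adj U = mat (dim_col U) (dim_row U) (\<lambda>(i,j). cnj (U $$ (j,i)))"

definition unitary_on :: "nat \<Rightarrow> complex mat \<Rightarrow> bool" where
  "unitary_on N U \<longleftrightarrow> U \<in> carrier_mat N N \<and> U * mat_adj U = 1\<^sub>m N \<and> mat_adj U * U = 1\<^sub>m N"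

text \<open>Basis index of |x,b,y> with x the first n qubits, b the next qubit, y the remaining
 m-n-1 qubits:  i = x * 2^(m-n) + b * 2^(m-n-1) + y.  QMQ_c maps |x,b,y> to |x, b xor c(x), y>.\<close>

definition qmq_perm :: "nat \<Rightarrow> nat \<Rightarrow> (nat \<Rightarrow> bool) \<Rightarrow> nat \<Rightarrow> nat" where
  "qmq_perm m n c i =
     (let x = i div 2^(m-n); b = (i div 2^(m-n-1)) mod 2 in
      if c x then (if b = 0 then i + 2^(m-n-1) else i - 2^(m-n-1)) else i)"

definition QMQ :: "nat \<Rightarrow> nat \<Rightarrow> (nat \<Rightarrow> bool) \<Rightarrow> complex mat" where
  "QMQ m n c = mat (2^m) (2^m) (\<lambda>(i,j). if i = qmq_perm m n c j then 1 else 0)"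

text \<open>A network U_0, O_1, U_1, ..., O_T, U_T is given by the list Us = [U_0, ..., U_T]
 (so T = length Us - 1); each oracle gate O_i is QMQ_c.  Final state before measurement:\<close>

definition final_state :: "nat \<Rightarrow> nat \<Rightarrow> (nat \<Rightarrow> bool) \<Rightarrow> complex mat list \<Rightarrow> complex vec" where
  "final_state m n c Us =
     foldl (\<lambda>v U. U *\<^sub>v (QMQ m n c *\<^sub>v v)) (hd Us *\<^sub>v unit_vec (2^m) 0) (tl Us)"

definition valid_network :: "nat \<Rightarrow> nat \<Rightarrow> complex mat list \<Rightarrow> bool" where
  "valid_network m n Us \<longleftrightarrow> n < m \<and> Us \<noteq> [] \<and> (\<forall>U \<in> set Us. unitary_on (2^m) U)"

definition queries :: "complex mat list \<Rightarrow> nat" where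
  "queries Us = length Us - 1"

text \<open>Success probability: the register is measured in the computational basis; outcome i
 is decoded (dec) into the hypothesis h = dec i represented by the output.\<close>
definition success_prob ::
  "nat \<Rightarrow> nat \<Rightarrow> (nat \<Rightarrow> bool) \<Rightarrow> complex mat list \<Rightarrow> (nat \<Rightarrow> nat \<Rightarrow> bool) \<Rightarrow> real" where
  "success_prob m n c Us dec =
     (\<Sum>i<2^m. if (\<forall>x<2^n. dec i x = c x) then (cmod (final_state m n c Us $ i))\<^sup>2 else 0)"

definition exactly_learns ::
  "nat \<Rightarrow> (nat \<Rightarrow> bool) set \<Rightarrow> nat \<Rightarrow> complex mat list \<Rightarrow> (nat \<Rightarrow> nat \<Rightarrow> bool) \<Rightarrow> bool" where
  "exactly_learns n C m Us dec \<longleftrightarrow>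
     valid_network m n Us \<and> (\<forall>c \<in> C. success_prob m n c Us dec \<ge> 2/3)"

end

theory Submission
  imports Defs "HOL-Analysis.L2_Norm"
begin

text \<open>
  A hybrid argument. Write \<open>g = gamma_hat n C\<close>, pick \<open>D \<subseteq> C\<close> with \<open>gamma n D = g\<close> and
  let \<open>c\<^sub>0\<close> be the pointwise majority vote of \<open>D\<close>, so that on every input at most \<open>g |D|\<close>
  concepts of \<open>D\<close> differ from \<open>c\<^sub>0\<close>. Compare the run with oracle \<open>c \<in> D\<close> to the run
  with oracle \<open>c\<^sub>0\<close>: each query moves the two states apart by at most twice the norm of the part of the current \<open>c\<^sub>0\<close>-state
  that queries inputs where \<open>c\<close> and \<open>c\<^sub>0\<close> differ. Summed over \<open>c \<in> D\<close> and bounded by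
  Cauchy-Schwarz, the total distance of the final states is at most \<open>2 T |D| \<surd>g\<close>.
  Conversely, an outcome decodes correctly for at most one concept, so success probability
  \<open>2/3\<close> for every \<open>c \<in> D\<close> forces a total distance of at least
  \<open>|D| \<surd>(2/3) - \<surd>|D| \<ge> |D|/10\<close>, as \<open>|D| \<ge> 2\<close>.
\<close>

abbreviation l2_norm :: "nat \<Rightarrow> complex vec \<Rightarrow> real" where
  "l2_norm N v \<equiv> L2_set (\<lambda>i. cmod (v $ i)) {..<N}"

lemma power2_L2_set: "(L2_set f A)\<^sup>2 = (\<Sum>i\<in>A. (f i)\<^sup>2)"
  unfolding L2_set_def by (simp add: sum_nonneg)

lemma L2_set_reindex_bij_betw: "bij_betw p A A \<Longrightarrow> L2_set (\<lambda>i. f (p i)) A = L2_set f A"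
  unfolding L2_set_def using sum.reindex_bij_betw[of p A A "\<lambda>i. (f i)\<^sup>2"] by simp

lemma l2_norm_add_le:
  assumes "u \<in> carrier_vec N" "w \<in> carrier_vec N"
  shows "l2_norm N (u + w) \<le> l2_norm N u + l2_norm N w"
proof -
  have "l2_norm N (u + w) \<le> L2_set (\<lambda>i. cmod (u $ i) + cmod (w $ i)) {..<N}"
    by (rule L2_set_mono) (use assms in \<open>auto intro: norm_triangle_ineq\<close>)
  also have "\<dots> \<le> l2_norm N u + l2_norm N w" by (rule L2_set_triangle_ineq)
  finally show ?thesis .
qed

lemma l2_norm_diff_le:
  assumes "u \<in> carrier_vec N" "w \<in> carrier_vec N"
  shows "l2_norm N (u - w) \<le> l2_norm N u + l2_norm N w"
proof -
  have "l2_norm N (u - w) \<le> L2_set (\<lambda>i. cmod (u $ i) + cmod (w $ i)) {..<N}"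
    by (rule L2_set_mono) (use assms in \<open>auto intro: norm_triangle_ineq4\<close>)
  also have "\<dots> \<le> l2_norm N u + l2_norm N w" by (rule L2_set_triangle_ineq)
  finally show ?thesis .
qed

lemma l2_norm_unit_vec:
  assumes "0 < N"
  shows "l2_norm N (unit_vec N 0) = 1"
proof -
  have "(\<Sum>i<N. (cmod (unit_vec N 0 $ i))\<^sup>2) = (\<Sum>i<N. if i = 0 then 1 else 0)"
    by (rule sum.cong) auto
  then show ?thesis using assms by (simp add: L2_set_def)
qed

lemma l2_norm_diff_self: "v \<in> carrier_vec N \<Longrightarrow> l2_norm N (v - v) = 0"
  by (rule L2_set_0') auto

lemma unitary_on_l2_norm:
  assumes U: "unitary_on N U" and v: "v \<in> carrier_vec N"
  shows "l2_norm N (U *\<^sub>v v) = l2_norm N v"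
proof -
  have Uc: "U \<in> carrier_mat N N" and I: "mat_adj U * U = 1\<^sub>m N"
    using U unfolding unitary_on_def by auto
  have Uv: "\<And>i. i < N \<Longrightarrow> (U *\<^sub>v v) $ i = (\<Sum>j<N. U $$ (i,j) * v $ j)"
    using Uc v by (auto simp: scalar_prod_def atLeast0LessThan intro!: sum.cong)
  have orth: "(\<Sum>i<N. cnj (U $$ (i,k)) * U $$ (i,j)) = (if k = j then 1 else 0)"
    if "k < N" "j < N" for k j
  proof -
    have "(mat_adj U * U) $$ (k,j) = (\<Sum>i<N. cnj (U $$ (i,k)) * U $$ (i,j))"
      using Uc that by (simp add: mat_adj_def scalar_prod_def atLeast0LessThan)
    then show ?thesis using I that by simp
  qed
  have "complex_of_real (\<Sum>i<N. (cmod ((U *\<^sub>v v) $ i))\<^sup>2)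
      = (\<Sum>i<N. (\<Sum>j<N. U $$ (i,j) * v $ j) * cnj (\<Sum>k<N. U $$ (i,k) * v $ k))"
    by (simp only: of_real_sum complex_norm_square) (rule sum.cong, simp_all add: Uv)
  also have "\<dots> = (\<Sum>i<N. \<Sum>k<N. \<Sum>j<N. (v $ j * cnj (v $ k)) * (cnj (U $$ (i,k)) * U $$ (i,j)))"
    by (simp add: sum_distrib_left sum_distrib_right mult_ac)
  also have "\<dots> = (\<Sum>k<N. \<Sum>j<N. (v $ j * cnj (v $ k)) * (\<Sum>i<N. cnj (U $$ (i,k)) * U $$ (i,j)))"
    by (subst sum.swap, subst sum.swap) (simp add: sum_distrib_left)
  also have "\<dots> = (\<Sum>k<N. \<Sum>j<N. if k = j then v $ j * cnj (v $ k) else 0)"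
    by (intro sum.cong refl) (simp add: orth)
  also have "\<dots> = (\<Sum>j<N. v $ j * cnj (v $ j))" by simp
  also have "\<dots> = complex_of_real (\<Sum>i<N. (cmod (v $ i))\<^sup>2)"
    by (simp only: of_real_sum complex_norm_square)
  finally show ?thesis unfolding L2_set_def by (simp only: of_real_eq_iff)
qed

definition flip_bit :: "nat \<Rightarrow> nat \<Rightarrow> nat" where
  "flip_bit K i = (if even (i div K) then i + K else i - K)"

lemma
  assumes "0 < K"
  shows flip_bit_flip_bit: "flip_bit K (flip_bit K i) = i"
    and flip_bit_div: "flip_bit K i div (2 * K) = i div (2 * K)"
proof -
  obtain q r where i: "i = q * K + r" and r: "r < K"
    using assms div_mult_mod_eq mod_less_divisor by metis
  have div: "(q' * K + r) div K = q'" for q' using r by simp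
  have div2: "(q' * K + r) div (2 * K) = q' div 2" for q'
    using div[of q'] by (simp add: div_mult2_eq mult.commute[of 2])
  have "flip_bit K (flip_bit K i) = i \<and> flip_bit K i div (2 * K) = i div (2 * K)"
  proof (cases "even q")
    case True
    have "flip_bit K i = (q + 1) * K + r" and "flip_bit K ((q + 1) * K + r) = i"
      using True div[of q] div[of "q + 1"] i by (simp_all add: flip_bit_def)
    then show ?thesis using True div2[of q] div2[of "q + 1"] i by simp
  next
    case False
    have "flip_bit K i = (q - 1) * K + r" and "flip_bit K ((q - 1) * K + r) = i"
      using False div[of q] div[of "q - 1"] i
      by (auto simp: flip_bit_def algebra_simps elim!: oddE)
    then show ?thesis using False div2[of q] div2[of "q - 1"] i by (auto elim!: oddE)
  qed
  then show "flip_bit K (flip_bit K i) = i" "flip_bit K i div (2 * K) = i div (2 * K)" by auto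
qed

lemma power2_diff_eq: "n < m \<Longrightarrow> (2::nat)^(m-n) = 2 * 2^(m-n-1)"
  by (metis Suc_diff_Suc diff_Suc_1 power_Suc)

lemma qmq_perm_flip_bit:
  assumes "n < m"
  shows "qmq_perm m n c i = (if c (i div 2^(m-n)) then flip_bit (2^(m-n-1)) i else i)"
  using power2_diff_eq[OF assms] unfolding qmq_perm_def flip_bit_def Let_def
  by (simp add: div_mult2_eq even_iff_mod_2_eq_zero)

lemma
  assumes "n < m"
  shows qmq_perm_qmq_perm: "qmq_perm m n c (qmq_perm m n c i) = i"
    and qmq_perm_div: "qmq_perm m n c i div 2^(m-n) = i div 2^(m-n)"
  using flip_bit_flip_bit[of "2^(m-n-1)" i] flip_bit_div[of "2^(m-n-1)" i]
  by (simp_all add: qmq_perm_flip_bit[OF assms] power2_diff_eq[OF assms])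

lemma div_power2_less: "n < m \<Longrightarrow> i < 2^m \<Longrightarrow> i div 2^(m-n) < (2::nat)^n"
  by (simp add: div_less_iff_less_mult flip: power_add)

lemma qmq_perm_less:
  assumes "n < m" "i < 2^m"
  shows "qmq_perm m n c i < 2^m"
proof -
  have "qmq_perm m n c i div 2^(m-n) < 2^n"
    using div_power2_less[OF assms] by (simp add: qmq_perm_div[OF assms(1)])
  then show ?thesis using assms(1) by (simp add: div_less_iff_less_mult flip: power_add)
qed

lemma bij_betw_qmq_perm: "n < m \<Longrightarrow> bij_betw (qmq_perm m n c) {..<2^m} {..<2^m}"
  by (rule bij_betw_byWitness[where f' = "qmq_perm m n c"])
    (auto simp: qmq_perm_qmq_perm qmq_perm_less)

lemma qmq_perm_cong: "c (i div 2^(m-n)) = f (i div 2^(m-n)) \<Longrightarrow> qmq_perm m n c i = qmq_perm m n f i"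
  by (simp add: qmq_perm_def Let_def)

lemma QMQ_carrier [simp]: "QMQ m n c \<in> carrier_mat (2^m) (2^m)"
  and dim_row_QMQ [simp]: "dim_row (QMQ m n c) = 2^m"
  and dim_col_QMQ [simp]: "dim_col (QMQ m n c) = 2^m"
  by (simp_all add: QMQ_def)

lemma QMQ_mult_vec_index:
  assumes nm: "n < m" and v: "v \<in> carrier_vec (2^m)" and i: "i < 2^m"
  shows "(QMQ m n c *\<^sub>v v) $ i = v $ qmq_perm m n c i"
proof -
  have "(QMQ m n c *\<^sub>v v) $ i = (\<Sum>j<2^m. (if i = qmq_perm m n c j then 1 else 0) * v $ j)"
    using i v by (simp add: QMQ_def scalar_prod_def atLeast0LessThan)
  also have "\<dots> = (\<Sum>j<2^m. if j = qmq_perm m n c i then v $ j else 0)"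
    by (rule sum.cong) (auto simp: qmq_perm_qmq_perm[OF nm])
  also have "\<dots> = v $ qmq_perm m n c i" using qmq_perm_less[OF nm i] by simp
  finally show ?thesis .
qed

lemma l2_norm_QMQ:
  assumes "n < m" and "v \<in> carrier_vec (2^m)"
  shows "l2_norm (2^m) (QMQ m n c *\<^sub>v v) = l2_norm (2^m) v"
proof -
  have "l2_norm (2^m) (QMQ m n c *\<^sub>v v) = L2_set (\<lambda>i. cmod (v $ qmq_perm m n c i)) {..<2^m}"
    by (rule L2_set_cong) (simp_all add: QMQ_mult_vec_index assms del: index_mult_mat_vec)
  also have "\<dots> = l2_norm (2^m) v"
    by (rule L2_set_reindex_bij_betw[OF bij_betw_qmq_perm[OF assms(1)]])
  finally show ?thesis .
qed

definition query_proj :: "nat \<Rightarrow> nat \<Rightarrow> (nat \<Rightarrow> bool) \<Rightarrow> complex vec \<Rightarrow> complex vec" where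
  "query_proj m n S v = vec (2^m) (\<lambda>i. if S (i div 2^(m-n)) then v $ i else 0)"

lemma query_proj_carrier [simp]: "query_proj m n S v \<in> carrier_vec (2^m)"
  by (simp add: query_proj_def)

lemma power2_l2_norm_query_proj:
  "(l2_norm (2^m) (query_proj m n S v))\<^sup>2 = (\<Sum>i<2^m. if S (i div 2^(m-n)) then (cmod (v $ i))\<^sup>2 else 0)"
  unfolding power2_L2_set by (rule sum.cong) (auto simp: query_proj_def)

text \<open>The two oracles act identically on basis states whose input \<open>x\<close> has \<open>c x = f x\<close>.\<close>

lemma QMQ_diff_eq_query_proj:
  assumes nm: "n < m" and b: "b \<in> carrier_vec (2^m)"
  shows "QMQ m n c *\<^sub>v b - QMQ m n f *\<^sub>v b
       = QMQ m n c *\<^sub>v query_proj m n (\<lambda>x. c x \<noteq> f x) b - QMQ m n f *\<^sub>v query_proj m n (\<lambda>x. c x \<noteq> f x) b"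
    (is "_ = ?O c ?P - ?O f ?P")
proof (rule eq_vecI)
  fix i assume "i < dim_vec (?O c ?P - ?O f ?P)"
  then have i: "i < 2^m" by simp
  show "(QMQ m n c *\<^sub>v b - QMQ m n f *\<^sub>v b) $ i = (?O c ?P - ?O f ?P) $ i"
    using qmq_perm_cong[of c i m n f] qmq_perm_less[OF nm i]
    by (auto simp: i b nm QMQ_mult_vec_index query_proj_def qmq_perm_div simp del: index_mult_mat_vec)
qed simp

lemma l2_norm_QMQ_diff_le:
  assumes nm: "n < m" and a: "a \<in> carrier_vec (2^m)" and b: "b \<in> carrier_vec (2^m)"
  shows "l2_norm (2^m) (QMQ m n c *\<^sub>v a - QMQ m n f *\<^sub>v b)
     \<le> l2_norm (2^m) (a - b) + 2 * l2_norm (2^m) (query_proj m n (\<lambda>x. c x \<noteq> f x) b)"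
proof -
  let ?O = "\<lambda>c v. QMQ m n c *\<^sub>v v" and ?P = "query_proj m n (\<lambda>x. c x \<noteq> f x) b"
  have "?O c a - ?O f b = ?O c (a - b) + (?O c b - ?O f b)"
    by (rule eq_vecI) (use a b in \<open>simp_all add: mult_minus_distrib_mat_vec[of _ "2^m" "2^m"]\<close>)
  also have "?O c b - ?O f b = ?O c ?P - ?O f ?P"
    by (rule QMQ_diff_eq_query_proj[OF nm b])
  finally have "l2_norm (2^m) (?O c a - ?O f b)
      \<le> l2_norm (2^m) (?O c (a - b)) + l2_norm (2^m) (?O c ?P - ?O f ?P)"
    by (simp only:) (rule l2_norm_add_le, use a b in \<open>simp_all add: mult_mat_vec_carrier[of _ "2^m" "2^m"]\<close>)
  also have "l2_norm (2^m) (?O c ?P - ?O f ?P) \<le> l2_norm (2^m) (?O c ?P) + l2_norm (2^m) (?O f ?P)"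
    by (rule l2_norm_diff_le) (simp_all add: mult_mat_vec_carrier[of _ "2^m" "2^m"])
  finally show ?thesis
    using l2_norm_QMQ[OF nm, of "a - b" c] l2_norm_QMQ[OF nm, of ?P c] l2_norm_QMQ[OF nm, of ?P f] a b
    by simp
qed

abbreviation oracle_run :: "(nat \<Rightarrow> bool) \<Rightarrow> nat \<Rightarrow> nat \<Rightarrow> complex vec \<Rightarrow> complex mat list \<Rightarrow> complex vec" where
  "oracle_run c m n v Us \<equiv> foldl (\<lambda>v U. U *\<^sub>v (QMQ m n c *\<^sub>v v)) v Us"

fun query_states :: "(nat \<Rightarrow> bool) \<Rightarrow> nat \<Rightarrow> nat \<Rightarrow> complex vec \<Rightarrow> complex mat list \<Rightarrow> complex vec list" where
  "query_states c m n v [] = []"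
| "query_states c m n v (U # Us) = v # query_states c m n (U *\<^sub>v (QMQ m n c *\<^sub>v v)) Us"

lemma length_query_states [simp]: "length (query_states c m n v Us) = length Us"
  by (induction Us arbitrary: v) simp_all

lemma oracle_step_carrier_l2_norm:
  assumes "n < m" "unitary_on (2^m) U" "v \<in> carrier_vec (2^m)"
  shows "U *\<^sub>v (QMQ m n c *\<^sub>v v) \<in> carrier_vec (2^m)"
    and "l2_norm (2^m) (U *\<^sub>v (QMQ m n c *\<^sub>v v)) = l2_norm (2^m) v"
  using assms unitary_on_l2_norm[of "2^m" U "QMQ m n c *\<^sub>v v"] l2_norm_QMQ[of n m v c]
  by (auto simp: unitary_on_def mult_mat_vec_carrier[of _ "2^m" "2^m"])

lemma oracle_run_carrier_l2_norm:
  assumes "n < m" "\<forall>U \<in> set Us. unitary_on (2^m) U" "v \<in> carrier_vec (2^m)"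
  shows "oracle_run c m n v Us \<in> carrier_vec (2^m) \<and> l2_norm (2^m) (oracle_run c m n v Us) = l2_norm (2^m) v"
  using assms(2,3) by (induction Us arbitrary: v) (auto simp: oracle_step_carrier_l2_norm assms(1))

lemma query_states_carrier_l2_norm:
  assumes "n < m" "\<forall>U \<in> set Us. unitary_on (2^m) U" "v \<in> carrier_vec (2^m)"
    and "w \<in> set (query_states c m n v Us)"
  shows "w \<in> carrier_vec (2^m) \<and> l2_norm (2^m) w = l2_norm (2^m) v"
  using assms(2-4)
proof (induction Us arbitrary: v)
  case (Cons U Us)
  then show ?case using oracle_step_carrier_l2_norm[OF assms(1), of U v c] by auto
qed simp

lemma hybrid_bound:
  assumes nm: "n < m" and "\<forall>U \<in> set Us. unitary_on (2^m) U"
    and "a \<in> carrier_vec (2^m)" "b \<in> carrier_vec (2^m)"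
  shows "l2_norm (2^m) (oracle_run c m n a Us - oracle_run f m n b Us)
      \<le> l2_norm (2^m) (a - b)
        + 2 * (\<Sum>w \<leftarrow> query_states f m n b Us. l2_norm (2^m) (query_proj m n (\<lambda>x. c x \<noteq> f x) w))"
  using assms(2-)
proof (induction Us arbitrary: a b)
  case Nil
  then show ?case by simp
next
  case (Cons U Us)
  let ?P = "\<lambda>w. l2_norm (2^m) (query_proj m n (\<lambda>x. c x \<noteq> f x) w)"
  have U: "unitary_on (2^m) U" and Uc: "U \<in> carrier_mat (2^m) (2^m)"
    using Cons.prems(1) by (auto simp: unitary_on_def)
  let ?a = "QMQ m n c *\<^sub>v a" and ?b = "QMQ m n f *\<^sub>v b"
  have ab: "?a \<in> carrier_vec (2^m)" "?b \<in> carrier_vec (2^m)"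
    using Cons.prems(2,3) by (simp_all add: mult_mat_vec_carrier[of _ "2^m" "2^m"])
  have "l2_norm (2^m) (U *\<^sub>v ?a - U *\<^sub>v ?b) = l2_norm (2^m) (?a - ?b)"
    using unitary_on_l2_norm[OF U, of "?a - ?b"] ab by (simp add: mult_minus_distrib_mat_vec[OF Uc])
  also have "\<dots> \<le> l2_norm (2^m) (a - b) + 2 * ?P b"
    using l2_norm_QMQ_diff_le[OF nm Cons.prems(2,3)] by simp
  finally have step: "l2_norm (2^m) (U *\<^sub>v ?a - U *\<^sub>v ?b) \<le> l2_norm (2^m) (a - b) + 2 * ?P b" .
  have "l2_norm (2^m) (oracle_run c m n (U *\<^sub>v ?a) Us - oracle_run f m n (U *\<^sub>v ?b) Us)
      \<le> l2_norm (2^m) (U *\<^sub>v ?a - U *\<^sub>v ?b) + 2 * (\<Sum>w \<leftarrow> query_states f m n (U *\<^sub>v ?b) Us. ?P w)"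
    using Cons.prems ab Uc by (intro Cons.IH) (simp_all add: mult_mat_vec_carrier[of _ "2^m" "2^m"])
  then show ?case using step by simp
qed

lemma gamma_a_le_gamma: "a < 2^n \<Longrightarrow> gamma_a D a \<le> gamma n D"
  unfolding gamma_def by (rule Max_ge) auto

lemma gamma_hat_attained:
  assumes "2 \<le> card C"
  obtains D where "D \<subseteq> C" "2 \<le> card D" "gamma n D = gamma_hat n C"
proof -
  let ?F = "{D. D \<subseteq> C \<and> 2 \<le> card D}"
  have "finite C" using assms by (intro card_ge_0_finite) simp
  then have "finite (gamma n ` ?F)" by simp
  moreover have "C \<in> ?F" using assms by simp
  ultimately have "Min (gamma n ` ?F) \<in> gamma n ` ?F" by (intro Min_in) auto
  moreover have "gamma_hat n C = Min (gamma n ` ?F)"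
    unfolding gamma_hat_def by (rule arg_cong[where f = Min]) blast
  ultimately show ?thesis using that by auto
qed

definition majority :: "(nat \<Rightarrow> bool) set \<Rightarrow> nat \<Rightarrow> bool" where
  "majority D a \<longleftrightarrow> card {c \<in> D. \<not> c a} \<le> card {c \<in> D. c a}"

lemma card_disagree_majority:
  assumes "finite D" "D \<noteq> {}"
  shows "real (card {c \<in> D. c a \<noteq> majority D a}) = gamma_a D a * real (card D)"
proof -
  let ?k0 = "card {c \<in> D. \<not> c a}" and ?k1 = "card {c \<in> D. c a}"
  have D: "real (card D) > 0" using assms by (simp add: card_gt_0_iff)
  have "gamma_a D a = min (real ?k0) (real ?k1) / real (card D)"
    using D by (simp add: gamma_a_def gamma_ab_def min_divide_distrib_right)
  moreover have "card {c \<in> D. c a \<noteq> majority D a} = min ?k0 ?k1"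
    by (simp add: majority_def min_def)
  ultimately show ?thesis using D by simp
qed

lemma sum_if_swap_card:
  assumes "finite D"
  shows "(\<Sum>c\<in>D. \<Sum>i<N. if P c i then r i else 0) = (\<Sum>i<N. (r i :: real) * real (card {c \<in> D. P c i}))"
  by (subst sum.swap) (simp add: sum.inter_filter[OF assms, symmetric] mult.commute)

lemma sum_sqrt_le:
  assumes "finite D" "\<And>c. c \<in> D \<Longrightarrow> 0 \<le> q c"
  shows "(\<Sum>c\<in>D. sqrt (q c)) \<le> sqrt (real (card D) * (\<Sum>c\<in>D. q c))"
proof -
  have "(\<Sum>c\<in>D. \<bar>sqrt (q c)\<bar> * \<bar>1\<bar>) \<le> L2_set (\<lambda>c. sqrt (q c)) D * L2_set (\<lambda>_. 1) D"
    by (rule L2_set_mult_ineq)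
  moreover have "L2_set (\<lambda>c. sqrt (q c)) D = sqrt (\<Sum>c\<in>D. q c)"
    unfolding L2_set_def using assms(2) by (simp cong: sum.cong)
  moreover have "(\<Sum>c\<in>D. \<bar>sqrt (q c)\<bar> * \<bar>1\<bar>) = (\<Sum>c\<in>D. sqrt (q c))"
    by (intro sum.cong refl) (simp add: assms(2))
  ultimately show ?thesis
    by (simp add: L2_set_constant real_sqrt_mult mult.commute)
qed

lemma sum_power2_l2_norm_query_proj_le:
  assumes D: "finite D" and nm: "n < m"
    and disagree: "\<And>a. a < 2^n \<Longrightarrow> real (card {c \<in> D. c a \<noteq> c0 a}) \<le> g * real (card D)"
  shows "(\<Sum>c\<in>D. (l2_norm (2^m) (query_proj m n (\<lambda>x. c x \<noteq> c0 x) w))\<^sup>2)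
       \<le> g * real (card D) * (l2_norm (2^m) w)\<^sup>2"
proof -
  have "(\<Sum>c\<in>D. (l2_norm (2^m) (query_proj m n (\<lambda>x. c x \<noteq> c0 x) w))\<^sup>2)
      = (\<Sum>i<2^m. (cmod (w $ i))\<^sup>2 * real (card {c \<in> D. c (i div 2^(m-n)) \<noteq> c0 (i div 2^(m-n))}))"
    unfolding power2_l2_norm_query_proj by (rule sum_if_swap_card[OF D])
  also have "\<dots> \<le> (\<Sum>i<2^m. (cmod (w $ i))\<^sup>2 * (g * real (card D)))"
    by (intro sum_mono mult_left_mono) (simp_all add: disagree div_power2_less[OF nm])
  also have "\<dots> = g * real (card D) * (l2_norm (2^m) w)\<^sup>2"
    by (simp add: power2_L2_set sum_distrib_left mult_ac)
  finally show ?thesis .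
qed

lemma sum_l2_norm_query_proj_le:
  assumes "finite D" "n < m"
    and "\<And>a. a < 2^n \<Longrightarrow> real (card {c \<in> D. c a \<noteq> c0 a}) \<le> g * real (card D)"
  shows "(\<Sum>c\<in>D. l2_norm (2^m) (query_proj m n (\<lambda>x. c x \<noteq> c0 x) w))
       \<le> real (card D) * sqrt g * l2_norm (2^m) w"
proof -
  have "(\<Sum>c\<in>D. l2_norm (2^m) (query_proj m n (\<lambda>x. c x \<noteq> c0 x) w))
      = (\<Sum>c\<in>D. sqrt ((l2_norm (2^m) (query_proj m n (\<lambda>x. c x \<noteq> c0 x) w))\<^sup>2))"
    by simp
  also have "\<dots> \<le> sqrt (real (card D) * (\<Sum>c\<in>D. (l2_norm (2^m) (query_proj m n (\<lambda>x. c x \<noteq> c0 x) w))\<^sup>2))"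
    by (rule sum_sqrt_le) (simp_all add: assms(1))
  also have "\<dots> \<le> sqrt (real (card D) * (g * real (card D) * (l2_norm (2^m) w)\<^sup>2))"
    by (intro real_sqrt_le_mono mult_left_mono sum_power2_l2_norm_query_proj_le assms) simp_all
  also have "\<dots> = real (card D) * sqrt g * l2_norm (2^m) w"
    by (simp add: real_sqrt_mult power2_eq_square mult_ac)
  finally show ?thesis .
qed

lemma concepts_eqI:
  assumes "c \<in> concepts n" "c' \<in> concepts n" "\<forall>x<2^n. c x = c' x"
  shows "c = c'"
proof
  fix x show "c x = c' x"
    using assms by (cases "x < 2^n") (auto simp: concepts_def)
qed

lemma sum_decoding_weights_le:
  assumes "D \<subseteq> concepts n" "finite D"
  shows "(\<Sum>c\<in>D. \<Sum>i<N. if \<forall>x<2^n. dec i x = c x then (cmod (v $ i))\<^sup>2 else 0) \<le> (l2_norm N v)\<^sup>2"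
proof -
  have "card {c \<in> D. \<forall>x<2^n. dec i x = c x} \<le> 1" for i
    unfolding One_nat_def using assms concepts_eqI[of _ n]
    by (subst card_le_Suc0_iff_eq) (auto intro: concepts_eqI)
  then have "(\<Sum>i<N. (cmod (v $ i))\<^sup>2 * real (card {c \<in> D. \<forall>x<2^n. dec i x = c x}))
      \<le> (\<Sum>i<N. (cmod (v $ i))\<^sup>2)"
    by (intro sum_mono mult_right_le_one_le) simp_all
  then show ?thesis by (simp add: sum_if_swap_card[OF assms(2)] power2_L2_set)
qed

lemma L2_set_restrict_diff_le:
  assumes "u \<in> carrier_vec N" "v \<in> carrier_vec N"
  shows "L2_set (\<lambda>i. if P i then cmod (u $ i) else 0) {..<N}
       \<le> L2_set (\<lambda>i. if P i then cmod (v $ i) else 0) {..<N} + l2_norm N (u - v)"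
proof -
  have "L2_set (\<lambda>i. if P i then cmod (u $ i) else 0) {..<N}
      \<le> L2_set (\<lambda>i. (if P i then cmod (v $ i) else 0) + cmod ((u - v) $ i)) {..<N}"
    by (rule L2_set_mono) (use assms norm_triangle_sub in auto)
  also have "\<dots> \<le> L2_set (\<lambda>i. if P i then cmod (v $ i) else 0) {..<N} + l2_norm N (u - v)"
    by (rule L2_set_triangle_ineq)
  finally show ?thesis .
qed

lemma sum_l2_norm_oracle_run_diff_le:
  assumes nm: "n < m" and Vs: "\<forall>U \<in> set Vs. unitary_on (2^m) U"
    and e: "e \<in> carrier_vec (2^m)" "l2_norm (2^m) e = 1" and D: "finite D"
    and disagree: "\<And>a. a < 2^n \<Longrightarrow> real (card {c \<in> D. c a \<noteq> c0 a}) \<le> g * real (card D)"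
  shows "(\<Sum>c\<in>D. l2_norm (2^m) (oracle_run c m n e Vs - oracle_run c0 m n e Vs))
       \<le> 2 * real (length Vs) * real (card D) * sqrt g"
proof -
  let ?ws = "query_states c0 m n e Vs"
  let ?P = "\<lambda>c w. l2_norm (2^m) (query_proj m n (\<lambda>x. c x \<noteq> c0 x) w)"
  have "(\<Sum>c\<in>D. l2_norm (2^m) (oracle_run c m n e Vs - oracle_run c0 m n e Vs))
      \<le> (\<Sum>c\<in>D. 2 * (\<Sum>w \<leftarrow> ?ws. ?P c w))"
    using hybrid_bound[OF nm Vs e(1) e(1)] l2_norm_diff_self[OF e(1)] by (intro sum_mono) simp
  also have "\<dots> = 2 * (\<Sum>w \<leftarrow> ?ws. \<Sum>c\<in>D. ?P c w)"
  proof -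
    have "(\<Sum>c\<in>D. \<Sum>w \<leftarrow> ws. ?P c w) = (\<Sum>w \<leftarrow> ws. \<Sum>c\<in>D. ?P c w)" for ws
      by (induction ws) (simp_all add: sum.distrib)
    then show ?thesis by (simp flip: sum_distrib_left)
  qed
  also have "\<dots> \<le> 2 * (\<Sum>w \<leftarrow> ?ws. real (card D) * sqrt g)"
  proof (intro mult_left_mono sum_list_mono)
    fix w assume "w \<in> set ?ws"
    then have "l2_norm (2^m) w = 1" using query_states_carrier_l2_norm[OF nm Vs e(1)] e(2) by simp
    then show "(\<Sum>c\<in>D. ?P c w) \<le> real (card D) * sqrt g"
      using sum_l2_norm_query_proj_le[OF D nm disagree, of w] by simp
  qed simp
  also have "\<dots> = 2 * real (length Vs) * real (card D) * sqrt g"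
    by (simp add: sum_list_triv)
  finally show ?thesis .
qed

lemma card_mult_sqrt_two_thirds_le:
  assumes DC: "D \<subseteq> concepts n" and D: "finite D"
    and v: "v \<in> carrier_vec N" "l2_norm N v = 1"
    and u: "\<And>c. c \<in> D \<Longrightarrow> u c \<in> carrier_vec N"
    and success: "\<And>c. c \<in> D \<Longrightarrow> 2/3 \<le> (\<Sum>i<N. if \<forall>x<2^n. dec i x = c x then (cmod (u c $ i))\<^sup>2 else 0)"
  shows "real (card D) * sqrt (2/3) \<le> sqrt (real (card D)) + (\<Sum>c\<in>D. l2_norm N (u c - v))"
proof -
  let ?P = "\<lambda>c i. \<forall>x<2^n. dec i x = c x"
  let ?weight = "\<lambda>c. \<Sum>i<N. if ?P c i then (cmod (v $ i))\<^sup>2 else 0"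
  have L2_restrict: "L2_set (\<lambda>i. if ?P c i then cmod (w $ i) else 0) {..<N}
      = sqrt (\<Sum>i<N. if ?P c i then (cmod (w $ i))\<^sup>2 else 0)" for c w
    unfolding L2_set_def by (simp add: if_distrib[where f = "\<lambda>x. x\<^sup>2"] cong: if_cong)
  have "sqrt (2/3) \<le> sqrt (?weight c) + l2_norm N (u c - v)" if c: "c \<in> D" for c
  proof -
    have "sqrt (2/3) \<le> L2_set (\<lambda>i. if ?P c i then cmod (u c $ i) else 0) {..<N}"
      using success[OF c] unfolding L2_restrict by simp
    also have "\<dots> \<le> sqrt (?weight c) + l2_norm N (u c - v)"
      using L2_set_restrict_diff_le[OF u[OF c] v(1), of "?P c"] unfolding L2_restrict .
    finally show ?thesis .
  qed
  then have "(\<Sum>c\<in>D. sqrt (2/3)) \<le> (\<Sum>c\<in>D. sqrt (?weight c) + l2_norm N (u c - v))"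
    by (rule sum_mono)
  then have "real (card D) * sqrt (2/3) \<le> (\<Sum>c\<in>D. sqrt (?weight c)) + (\<Sum>c\<in>D. l2_norm N (u c - v))"
    by (simp add: sum.distrib)
  also have "(\<Sum>c\<in>D. sqrt (?weight c)) \<le> sqrt (real (card D) * (\<Sum>c\<in>D. ?weight c))"
    by (rule sum_sqrt_le[OF D]) (simp add: sum_nonneg)
  also have "\<dots> \<le> sqrt (real (card D))"
    using sum_decoding_weights_le[OF DC D, where N = N and dec = dec and v = v] v(2) by (simp add: mult_left_le)
  finally show ?thesis by simp
qed

lemma one_twentieth_le_of_sqrt_two_thirds_le:
  fixes k T s :: real
  assumes k: "2 \<le> k" and h: "k * sqrt (2/3) \<le> sqrt k + 2 * T * k * s"
  shows "1/20 \<le> T * s"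
proof -
  have sqrt_two_thirds: "81/100 \<le> sqrt (2/3::real)"
    by (rule real_le_rsqrt) (simp add: power2_eq_square)
  have sqrt_half: "sqrt (1/2::real) \<le> 71/100"
    by (rule real_le_lsqrt) (simp_all add: power2_eq_square)
  have sqrt_k: "sqrt k \<le> k * sqrt (1/2)"
  proof -
    have "k * 2 \<le> k * k" using k by (intro mult_left_mono) auto
    then have "sqrt k \<le> sqrt (k * k * (1/2))" by (intro real_sqrt_le_mono) simp
    also have "\<dots> = k * sqrt (1/2)"
      using k by (simp only: real_sqrt_mult real_sqrt_mult_self)
    finally show ?thesis .
  qed
  have "k * (81/100) \<le> k * sqrt (2/3)" using sqrt_two_thirds k by simp
  also have "\<dots> \<le> k * sqrt (1/2) + 2 * T * k * s" using h sqrt_k by linarith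
  also have "\<dots> \<le> k * (71/100) + 2 * T * k * s" using sqrt_half k by simp
  finally have "k * (1/10) \<le> k * (2 * T * s)" by (simp add: algebra_simps)
  then show ?thesis using k by simp
qed

lemma queries_mult_sqrt_gamma_hat_ge:
  assumes C: "C \<subseteq> concepts n" "2 \<le> card C" and learns: "exactly_learns n C m Us dec"
  shows "1/20 \<le> real (queries Us) * sqrt (gamma_hat n C)"
proof -
  obtain D where DC: "D \<subseteq> C" and D2: "2 \<le> card D" and gamma_D: "gamma n D = gamma_hat n C"
    using gamma_hat_attained[OF C(2)] by blast
  have D: "finite D" "D \<noteq> {}" using D2 by (auto intro: card_ge_0_finite)
  have disagree: "real (card {c \<in> D. c a \<noteq> majority D a}) \<le> gamma_hat n C * real (card D)"
    if "a < 2^n" for a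
    using card_disagree_majority[OF D, of a] gamma_a_le_gamma[OF that, of D] gamma_D
    by (simp add: mult_right_mono)
  have nm: "n < m" and unitary: "\<forall>U \<in> set Us. unitary_on (2^m) U"
    and success: "\<And>c. c \<in> C \<Longrightarrow> 2/3 \<le> success_prob m n c Us dec"
    using learns by (auto simp: exactly_learns_def valid_network_def)
  obtain U0 Vs where Us: "Us = U0 # Vs"
    using learns by (cases Us) (auto simp: exactly_learns_def valid_network_def)
  have U0: "unitary_on (2^m) U0" and Vs: "\<forall>U \<in> set Vs. unitary_on (2^m) U"
    using unitary Us by auto
  define e where "e = U0 *\<^sub>v unit_vec (2^m) 0"
  have e: "e \<in> carrier_vec (2^m)" "l2_norm (2^m) e = 1"
    using U0 unitary_on_l2_norm[OF U0, of "unit_vec (2^m) 0"] l2_norm_unit_vec[of "2^m"]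
    by (auto simp: e_def unitary_on_def mult_mat_vec_carrier[of _ "2^m" "2^m"])
  have final: "final_state m n c Us = oracle_run c m n e Vs" for c
    by (simp add: final_state_def Us e_def)
  let ?dist = "\<lambda>c. l2_norm (2^m) (oracle_run c m n e Vs - oracle_run (majority D) m n e Vs)"
  have "real (card D) * sqrt (2/3) \<le> sqrt (real (card D)) + (\<Sum>c\<in>D. ?dist c)"
  proof (rule card_mult_sqrt_two_thirds_le[where dec = dec])
    show "2/3 \<le> (\<Sum>i<2^m. if \<forall>x<2^n. dec i x = c x then (cmod (oracle_run c m n e Vs $ i))\<^sup>2 else 0)"
      if "c \<in> D" for c
      using success[of c] that DC unfolding success_prob_def final by auto
  qed (use C(1) DC D e oracle_run_carrier_l2_norm[OF nm Vs e(1)] in auto)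
  also have "(\<Sum>c\<in>D. ?dist c) \<le> 2 * real (length Vs) * real (card D) * sqrt (gamma_hat n C)"
    by (rule sum_l2_norm_oracle_run_diff_le[OF nm Vs e D(1) disagree])
  finally have "1/20 \<le> real (length Vs) * sqrt (gamma_hat n C)"
    by (intro one_twentieth_le_of_sqrt_two_thirds_le[where k = "real (card D)"]) (use D2 in simp_all)
  then show ?thesis by (simp add: queries_def Us)
qed

theorem theorem7:
  shows "\<exists>\<kappa>::real. \<kappa> > 0 \<and>
    (\<forall>n C m Us dec. C \<subseteq> concepts n \<longrightarrow> 2 \<le> card C \<longrightarrow> exactly_learns n C m Us dec \<longrightarrow>
       real (queries Us) \<ge> \<kappa> * sqrt (1 / gamma_hat n C))"
proof (intro exI[of _ "1/20"] conjI allI impI)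
  fix n C m Us dec
  assume "C \<subseteq> concepts n" "2 \<le> card C" "exactly_learns n C m Us dec"
  then have bound: "1/20 \<le> real (queries Us) * sqrt (gamma_hat n C)"
    by (rule queries_mult_sqrt_gamma_hat_ge)
  show "1/20 * sqrt (1 / gamma_hat n C) \<le> real (queries Us)"
  proof (cases "gamma_hat n C > 0")
    case True
    then show ?thesis using bound by (simp add: real_sqrt_divide pos_divide_le_eq)
  next
    case False
    then have "sqrt (1 / gamma_hat n C) \<le> 0" by simp
    moreover have "0 \<le> real (queries Us)" by simp
    ultimately show ?thesis by linarith
  qed
qed simp

end
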